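(* Let $\mathcal{H}$ be a Loynes $\mathcal{Z}$-space (pseudo-Hilbert space) over an admissible space $\mathcal{Z}$, and let $P,Q\in\mathcal{B}^*(\mathcal{H})$ be gramian self-adjoint projections on $\mathcal{H}$ such that $$\|P-Q\|<1,$$ where $\|\cdot\|$ is the operator norm on $\mathcal{B}(\mathcal{H})$ defined below. Then there exists a partial gramian isometry $T\in\mathcal{PI}(\mathcal{H})$ such that $P=T^*T$ and $Q=TT^*$.
   Context: An admissible space $\mathcal{Z}$ (in the sense of Loynes) is a complete Hausdorff locally convex topological vector space equipped with an involution $z\mapsto z^*$ and a closed convex cone $\mathcal{Z}_+$ defining an order $\le$ ($z_1\le z_2$ iff $z_2-z_1\in\mathcal{Z}_+$), such that positive elements are self-adjoint, the topology has a base of neighborhoods $V$ of $0$ that are solid ($0\le z_1\le z_2$, $z_2\in V$ implies $z_1\in V$), and every monotonically decreasing sequence of positive elements converges. A Loynes $\mathcal{Z}$-space $\mathcal{H}$ is a complex vector space with a $\mathcal{Z}$-valued inner product (gramian) $[\cdot,\cdot]:\mathcal{H}\times\mathcal{H}\to\mathcal{Z}$ that is linear in the first variable, satisfies $[h,k]^*=[k,h]$, $[h,h]\ge 0$, and $[h,h]=0$ only for $h=0$, and such that $\mathcal{H}$ is complete in the topology whose neighborhoods of $0$ are $\{h:[h,h]\in V\}$ for $V$ neighborhoods of $0$ in $\mathcal{Z}$. A linear operator $T:\mathcal{H}\to\mathcal{H}$ is bounded if there is $M>0$ with $[Th,Th]\le M^2[h,h]$ for all $h\in\mathcal{H}$;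 the set of such operators is $\mathcal{B}(\mathcal{H})$, normed by $\|T\|=\inf\{M: [Th,Th]\le M^2[h,h]\ \forall h\}$. The adjoint $T^*$ of $T$ (if it exists) is the linear operator with $[Th,k]=[h,T^*k]$ for all $h,k$; $\mathcal{B}^*(\mathcal{H})$ denotes the adjointable elements of $\mathcal{B}(\mathcal{H})$ (a $C^*$-algebra). A gramian self-adjoint projection is $P\in\mathcal{B}^*(\mathcal{H})$ with $P=P^*=P^2$. A subspace $\mathcal{M}$ is accessible if it has a gramian orthogonal complement $\mathcal{M}^\perp=\{h:[h,m]=0\ \forall m\in\mathcal{M}\}$ with $\mathcal{H}=\mathcal{M}\oplus\mathcal{M}^\perp$. A linear operator $T:\mathcal{H}\to\mathcal{H}$ is a partial gramian isometry if its kernel $\mathcal{N}(T)$ and range $\mathcal{R}(T)$ are accessible subspaces and $T$ restricted to $\mathcal{N}(T)^\perp$ is a gramian-preserving (gramian unitary) map onto $\mathcal{R}(T)$, i.e. $[Th,Tk]=[h,k]$ for $h,k\in\mathcal{N}(T)^\perp$. The set of these is denoted $\mathcal{PI}(\mathcal{H})$; its elements lie in $\mathcal{B}^*(\mathcal{H})$. *)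

theory Defs
  imports "HOL-Analysis.Analysis"
begin

definition nhds0_set :: "'z::{topological_space,zero} set \<Rightarrow> bool" where
  "nhds0_set V \<longleftrightarrow> (\<exists>W. open W \<and> 0 \<in> W \<and> W \<subseteq> V)"

definition solid_set :: "'z::ab_group_add set \<Rightarrow> 'z set \<Rightarrow> bool" where
  "solid_set Zp V \<longleftrightarrow> (\<forall>z1 z2. z1 \<in> Zp \<and> z2 - z1 \<in> Zp \<and> z2 \<in> V \<longrightarrow> z1 \<in> V)"

definition convex_wrt :: "(complex \<Rightarrow> 'z::ab_group_add \<Rightarrow> 'z) \<Rightarrow> 'z set \<Rightarrow> bool" where
  "convex_wrt smul V \<longleftrightarrow>
     (\<forall>x\<in>V. \<forall>y\<in>V. \<forall>t::real. 0 \<le> t \<and> t \<le> 1 \<longrightarrow>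
        smul (complex_of_real t) x + smul (complex_of_real (1 - t)) y \<in> V)"

locale admissible_space = vector_space smul
  for smul :: "complex \<Rightarrow> 'z::{t2_space,ab_group_add} \<Rightarrow> 'z" +
  fixes inv :: "'z \<Rightarrow> 'z" and Zp :: "'z set"
  assumes add_cont: "continuous_on UNIV (\<lambda>p::'z\<times>'z. fst p + snd p)"
    and smul_cont: "continuous_on UNIV (\<lambda>p::complex\<times>'z. smul (fst p) (snd p))"
    and complete: "\<And>F::'z filter. F \<noteq> bot \<Longrightarrow>
        (\<forall>U. open U \<and> 0 \<in> U \<longrightarrow> eventually (\<lambda>p. fst p - snd p \<in> U) (F \<times>\<^sub>F F)) \<Longrightarrow>
        \<exists>z. F \<le> nhds z"
    and locally_convex: "\<And>U. open U \<Longrightarrow> 0 \<in> U \<Longrightarrow>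
        \<exists>V. nhds0_set V \<and> V \<subseteq> U \<and> convex_wrt smul V"
    and inv_inv: "\<And>z. inv (inv z) = z"
    and inv_add: "\<And>z w. inv (z + w) = inv z + inv w"
    and inv_smul: "\<And>a z. inv (smul a z) = smul (cnj a) (inv z)"
    and Zp_closed: "closed Zp"
    and Zp_zero: "0 \<in> Zp"
    and Zp_add: "\<And>z w. z \<in> Zp \<Longrightarrow> w \<in> Zp \<Longrightarrow> z + w \<in> Zp"
    and Zp_smul: "\<And>z r. z \<in> Zp \<Longrightarrow> 0 \<le> r \<Longrightarrow> smul (complex_of_real r) z \<in> Zp"
    and Zp_pointed: "\<And>z. z \<in> Zp \<Longrightarrow> - z \<in> Zp \<Longrightarrow> z = 0"
    and pos_selfadjoint: "\<And>z. z \<in> Zp \<Longrightarrow> inv z = z"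
    and solid_base: "\<And>U. open U \<Longrightarrow> 0 \<in> U \<Longrightarrow>
        \<exists>V. nhds0_set V \<and> V \<subseteq> U \<and> solid_set Zp V"
    and decreasing_converges: "\<And>f::nat \<Rightarrow> 'z. (\<forall>n. f n \<in> Zp) \<Longrightarrow>
        (\<forall>n. f n - f (Suc n) \<in> Zp) \<Longrightarrow> \<exists>z. f \<longlonglongrightarrow> z"

locale loynes_space = admissible_space smulZ invZ Zp + H: vector_space smulH
  for smulZ :: "complex \<Rightarrow> 'z::{t2_space,ab_group_add} \<Rightarrow> 'z"
  and invZ :: "'z \<Rightarrow> 'z" and Zp :: "'z set"
  and smulH :: "complex \<Rightarrow> 'h::ab_group_add \<Rightarrow> 'h" +
  fixes gram :: "'h \<Rightarrow> 'h \<Rightarrow> 'z"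
  assumes gram_add: "\<And>x y z. gram (x + y) z = gram x z + gram y z"
    and gram_smul: "\<And>a x y. gram (smulH a x) y = smulZ a (gram x y)"
    and gram_sym: "\<And>x y. invZ (gram x y) = gram y x"
    and gram_pos: "\<And>x. gram x x \<in> Zp"
    and gram_definite: "\<And>x. gram x x = 0 \<Longrightarrow> x = 0"
    and gram_complete: "\<And>F::'h filter. F \<noteq> bot \<Longrightarrow>
        (\<forall>V. nhds0_set V \<longrightarrow>
           eventually (\<lambda>p. gram (fst p - snd p) (fst p - snd p) \<in> V) (F \<times>\<^sub>F F)) \<Longrightarrow>
        \<exists>h. \<forall>V. nhds0_set V \<longrightarrow> eventually (\<lambda>x. gram (x - h) (x - h) \<in> V) F"

definition bounded_by ::
  "(complex \<Rightarrow> 'z::ab_group_add \<Rightarrow> 'z) \<Rightarrow> 'z set \<Rightarrow> ('h \<Rightarrow> 'h \<Rightarrow> 'z) \<Rightarrow> ('h \<Rightarrow> 'h) \<Rightarrow> real \<Rightarrow> bool" where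
  "bounded_by smulZ Zp gram T M \<longleftrightarrow>
     M > 0 \<and> (\<forall>h. smulZ (complex_of_real (M ^ 2)) (gram h h) - gram (T h) (T h) \<in> Zp)"

definition Bops ::
  "(complex \<Rightarrow> 'z::ab_group_add \<Rightarrow> 'z) \<Rightarrow> 'z set \<Rightarrow> (complex \<Rightarrow> 'h::ab_group_add \<Rightarrow> 'h) \<Rightarrow>
   ('h \<Rightarrow> 'h \<Rightarrow> 'z) \<Rightarrow> ('h \<Rightarrow> 'h) set" where
  "Bops smulZ Zp smulH gram =
     {T. Vector_Spaces.linear smulH smulH T \<and> (\<exists>M. bounded_by smulZ Zp gram T M)}"

definition op_norm ::
  "(complex \<Rightarrow> 'z::ab_group_add \<Rightarrow> 'z) \<Rightarrow> 'z set \<Rightarrow> ('h \<Rightarrow> 'h \<Rightarrow> 'z) \<Rightarrow> ('h \<Rightarrow> 'h) \<Rightarrow> real" where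
  "op_norm smulZ Zp gram T = Inf {M. bounded_by smulZ Zp gram T M}"

definition is_adjoint ::
  "(complex \<Rightarrow> 'h::ab_group_add \<Rightarrow> 'h) \<Rightarrow> ('h \<Rightarrow> 'h \<Rightarrow> 'z) \<Rightarrow> ('h \<Rightarrow> 'h) \<Rightarrow> ('h \<Rightarrow> 'h) \<Rightarrow> bool" where
  "is_adjoint smulH gram T S \<longleftrightarrow>
     Vector_Spaces.linear smulH smulH S \<and> (\<forall>h k. gram (T h) k = gram h (S k))"

definition adjoint ::
  "(complex \<Rightarrow> 'h::ab_group_add \<Rightarrow> 'h) \<Rightarrow> ('h \<Rightarrow> 'h \<Rightarrow> 'z) \<Rightarrow> ('h \<Rightarrow> 'h) \<Rightarrow> ('h \<Rightarrow> 'h)" where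
  "adjoint smulH gram T = (SOME S. is_adjoint smulH gram T S)"

definition Bstar ::
  "(complex \<Rightarrow> 'z::ab_group_add \<Rightarrow> 'z) \<Rightarrow> 'z set \<Rightarrow> (complex \<Rightarrow> 'h::ab_group_add \<Rightarrow> 'h) \<Rightarrow>
   ('h \<Rightarrow> 'h \<Rightarrow> 'z) \<Rightarrow> ('h \<Rightarrow> 'h) set" where
  "Bstar smulZ Zp smulH gram =
     {T \<in> Bops smulZ Zp smulH gram. \<exists>S. is_adjoint smulH gram T S}"

definition gram_sa_projection ::
  "(complex \<Rightarrow> 'z::ab_group_add \<Rightarrow> 'z) \<Rightarrow> 'z set \<Rightarrow> (complex \<Rightarrow> 'h::ab_group_add \<Rightarrow> 'h) \<Rightarrow>
   ('h \<Rightarrow> 'h \<Rightarrow> 'z) \<Rightarrow> ('h \<Rightarrow> 'h) \<Rightarrow> bool" where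
  "gram_sa_projection smulZ Zp smulH gram P \<longleftrightarrow>
     P \<in> Bstar smulZ Zp smulH gram \<and> adjoint smulH gram P = P \<and> P \<circ> P = P"

definition gram_orth :: "('h \<Rightarrow> 'h \<Rightarrow> 'z::zero) \<Rightarrow> 'h set \<Rightarrow> 'h set" where
  "gram_orth gram M = {h. \<forall>m\<in>M. gram h m = 0}"

definition accessible ::
  "(complex \<Rightarrow> 'h::ab_group_add \<Rightarrow> 'h) \<Rightarrow> ('h \<Rightarrow> 'h \<Rightarrow> 'z::zero) \<Rightarrow> 'h set \<Rightarrow> bool" where
  "accessible smulH gram M \<longleftrightarrow>
     module.subspace smulH M \<and> (\<forall>h. \<exists>m\<in>M. \<exists>n\<in>gram_orth gram M. h = m + n)"

definition PI ::
  "(complex \<Rightarrow> 'h::ab_group_add \<Rightarrow> 'h) \<Rightarrow> ('h \<Rightarrow> 'h \<Rightarrow> 'z::zero) \<Rightarrow> ('h \<Rightarrow> 'h) set" where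
  "PI smulH gram =
     {T. Vector_Spaces.linear smulH smulH T
       \<and> accessible smulH gram {h. T h = 0}
       \<and> accessible smulH gram (range T)
       \<and> (\<forall>h\<in>gram_orth gram {h. T h = 0}. \<forall>k\<in>gram_orth gram {h. T h = 0}.
             gram (T h) (T k) = gram h k)}"

end

theory Submission
  imports Defs "HOL-Computational_Algebra.Polynomial"
begin

text \<open>
  Put \<open>X = (P - Q)\<^sup>2\<close>. Then \<open>X\<close> is self-adjoint with \<open>[X h, X h] \<le> r\<^sup>2 [h, h]\<close> for some
  \<open>r < 1\<close>, it commutes with \<open>P\<close> and \<open>Q\<close>, and \<open>PQP = (1 - X) P\<close>, \<open>QPQ = (1 - X) Q\<close>.
  The inverse square root \<open>R = (1 - X)\<^sup>-\<^sup>1\<^sup>/\<^sup>2\<close> is the gramian limit of the partial sums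
  \<open>p\<^sub>N(X)\<close> of the binomial series \<open>\<Sum> (-1)\<^sup>n (-1/2 choose n) X\<^sup>n\<close>: the coefficients lie in
  \<open>[0, 1]\<close>, so the partial sums are Cauchy at the geometric rate \<open>r\<^sup>N\<close>, and the Loynes space
  is complete. As a limit of polynomials in \<open>X\<close>, \<open>R\<close> is self-adjoint and commutes with \<open>P\<close>,
  \<open>Q\<close> and \<open>X\<close>; and \<open>R (1 - X) R = 1\<close> because the coefficients of
  \<open>p\<^sub>N(x)\<^sup>2 (1 - x) - 1\<close>, weighted by \<open>r\<^sup>n\<close>, sum to \<open>O(r\<^sup>N)\<close>.
  Hence \<open>T = QPR\<close> has adjoint \<open>T\<^sup>* = RPQ\<close>, with \<open>T\<^sup>*T = R (PQP) R = R (1 - X) R P = P\<close> and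
  \<open>TT\<^sup>* = (QPQ) R\<^sup>2 = (1 - X) R\<^sup>2 Q = Q\<close>. Finally, any adjointable \<open>T\<close> for which \<open>T\<^sup>*T\<close> and
  \<open>TT\<^sup>*\<close> are gramian projections is a partial gramian isometry.
\<close>

lemma continuous2_open_nbhds:
  assumes "continuous_on UNIV (\<lambda>p. f (fst p) (snd p))" "open U" "f a b \<in> U"
  shows "\<exists>A B. open A \<and> open B \<and> a \<in> A \<and> b \<in> B \<and> (\<forall>x\<in>A. \<forall>y\<in>B. f x y \<in> U)"
proof -
  let ?S = "(\<lambda>p. f (fst p) (snd p)) -` U"
  have "open ?S" using open_vimage[OF assms(2,1)] .
  moreover have "(a, b) \<in> ?S" using assms(3) by simp
  ultimately obtain A B where "open A" "open B" "(a, b) \<in> A \<times> B" "A \<times> B \<subseteq> ?S"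
    by (rule open_prod_elim)
  then show ?thesis by (intro exI[of _ A] exI[of _ B]) (auto simp: subset_eq)
qed

lemma tendsto_continuous2:
  assumes "continuous_on UNIV (\<lambda>p. f (fst p) (snd p))" "(u \<longlongrightarrow> a) F" "(v \<longlongrightarrow> b) F"
  shows "((\<lambda>x. f (u x) (v x)) \<longlongrightarrow> f a b) F"
proof -
  have "((\<lambda>x. (u x, v x)) \<longlongrightarrow> (a, b)) F" using assms(2,3) by (rule tendsto_Pair)
  from continuous_on_tendsto_compose[OF assms(1) this] show ?thesis by (simp add: o_def)
qed

lemma bounded_by_less_of_op_norm_less:
  assumes "\<exists>M. bounded_by smulZ Zp gram T M" "op_norm smulZ Zp gram T < c"
  shows "\<exists>M < c. bounded_by smulZ Zp gram T M"
  using cInf_lessD[of "{M. bounded_by smulZ Zp gram T M}" c] assms unfolding op_norm_def by auto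

section \<open>Order and gramian calculus\<close>

context loynes_space
begin

abbreviation rscale :: "real \<Rightarrow> 'z \<Rightarrow> 'z" where "rscale r z \<equiv> smulZ (complex_of_real r) z"

definition zle :: "'z \<Rightarrow> 'z \<Rightarrow> bool" where "zle z w \<longleftrightarrow> w - z \<in> Zp"

lemma rscale_rscale: "rscale r (rscale s z) = rscale (r * s) z"
  by (simp only: scale_scale of_real_mult)

lemma zle_refl: "zle z z"
  unfolding zle_def using Zp_zero by simp

lemma zle_trans [trans]: "zle a b \<Longrightarrow> zle b c \<Longrightarrow> zle a c"
  unfolding zle_def using Zp_add[of "c - b" "b - a"] by simp

lemma zle_add: "zle a b \<Longrightarrow> zle c d \<Longrightarrow> zle (a + c) (b + d)"
  unfolding zle_def using Zp_add[of "b - a" "d - c"] by (simp add: algebra_simps)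

lemma zle_rscale_mono: "zle a b \<Longrightarrow> 0 \<le> r \<Longrightarrow> zle (rscale r a) (rscale r b)"
  unfolding zle_def using Zp_smul[of "b - a" r] by (simp add: scale_right_diff_distrib)

lemma zle_rscale_left_mono: "z \<in> Zp \<Longrightarrow> r \<le> s \<Longrightarrow> zle (rscale r z) (rscale s z)"
  unfolding zle_def using Zp_smul[of z "s - r"] by (simp add: scale_left_diff_distrib[symmetric])

lemma zle_rscale_cancel:
  assumes "0 < c" "zle (rscale c a) (rscale c b)"
  shows "zle a b"
proof -
  have "zle (rscale (1 / c) (rscale c a)) (rscale (1 / c) (rscale c b))"
    using assms(2) by (rule zle_rscale_mono) (use assms(1) in simp)
  moreover have "1 / c * c = 1" using assms(1) by simp
  ultimately show ?thesis by (simp only: rscale_rscale of_real_1 scale_one)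
qed

lemma zle_0_iff: "zle 0 z \<longleftrightarrow> z \<in> Zp"
  by (simp add: zle_def)

lemma zle_antisym: "zle a b \<Longrightarrow> zle b a \<Longrightarrow> a = b"
  unfolding zle_def using Zp_pointed[of "b - a"] by simp

lemma solid_setD: "solid_set Zp V \<Longrightarrow> zle 0 z \<Longrightarrow> zle z w \<Longrightarrow> w \<in> V \<Longrightarrow> z \<in> V"
  unfolding solid_set_def zle_def by auto

lemma smulZ_two: "smulZ 2 z = z + z"
  by (metis one_add_one scale_left_distrib scale_one)

lemma gram_add_right: "gram x (y + z) = gram x y + gram x z"
  by (metis gram_sym gram_add inv_add)

lemma gram_smul_right: "gram x (smulH c y) = smulZ (cnj c) (gram x y)"
  by (metis gram_sym gram_smul inv_smul)

lemma gram_zero_left [simp]: "gram 0 y = 0"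
  using gram_add[of 0 0 y] by simp

lemma gram_zero_right [simp]: "gram x 0 = 0"
  using gram_add_right[of x 0 0] by simp

lemma gram_minus_left: "gram (- x) y = - gram x y"
  using gram_add[of x "- x" y] by (simp add: add_eq_0_iff)

lemma gram_minus_right: "gram x (- y) = - gram x y"
  using gram_add_right[of x y "- y"] by (simp add: add_eq_0_iff)

lemma gram_diff_left: "gram (x - y) z = gram x z - gram y z"
  by (simp only: diff_conv_add_uminus gram_add gram_minus_left)

lemma gram_diff_right: "gram x (y - z) = gram x y - gram x z"
  by (simp only: diff_conv_add_uminus gram_add_right gram_minus_right)

lemma gram_rscale_left: "gram (smulH (complex_of_real r) x) y = rscale r (gram x y)"
  by (simp add: gram_smul)

lemma gram_rscale_right: "gram x (smulH (complex_of_real r) y) = rscale r (gram x y)"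
  by (simp add: gram_smul_right)

lemma gram_add_add: "gram (x + y) (x + y) = gram x x + gram y y + (gram x y + gram y x)"
  by (simp add: gram_add gram_add_right algebra_simps)

lemma gram_diff_diff: "gram (x - y) (x - y) = gram x x + gram y y - (gram x y + gram y x)"
  by (simp add: gram_diff_left gram_diff_right algebra_simps)

lemma gram_neg_neg: "gram (- x) (- x) = gram x x"
  by (simp add: gram_minus_left gram_minus_right)

lemma gram_smul_smul: "gram (smulH c x) (smulH c x) = rscale ((cmod c)\<^sup>2) (gram x x)"
proof -
  have "gram (smulH c x) (smulH c x) = smulZ (c * cnj c) (gram x x)"
    by (simp add: gram_smul gram_smul_right)
  also have "c * cnj c = complex_of_real ((cmod c)\<^sup>2)" by (rule complex_norm_square[symmetric])
  finally show ?thesis .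
qed

lemma gram_self_eq_0_iff: "gram x x = 0 \<longleftrightarrow> x = 0"
  using gram_definite by auto

lemma gram_real_combination:
  "gram (smulH (complex_of_real p) x + smulH (complex_of_real q) y)
        (smulH (complex_of_real p) x + smulH (complex_of_real q) y)
   = rscale (p\<^sup>2) (gram x x) + rscale (q\<^sup>2) (gram y y) + rscale (p * q) (gram x y + gram y x)"
  by (simp only: gram_add_add gram_rscale_left gram_rscale_right rscale_rscale power2_eq_square
      scale_right_distrib mult.commute[of q p])

lemma gram_sym_sum_le:
  "zle (rscale (- (p * q)) (gram x y + gram y x)) (rscale (p\<^sup>2) (gram x x) + rscale (q\<^sup>2) (gram y y))"
  using gram_pos[of "smulH (complex_of_real p) x + smulH (complex_of_real q) y"]
  unfolding zle_def gram_real_combination by (simp add: of_real_minus)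

lemma gram_add_le: "zle (gram (x + y) (x + y)) (rscale 2 (gram x x) + rscale 2 (gram y y))"
proof -
  have "rscale 2 (gram x x) + rscale 2 (gram y y) - gram (x + y) (x + y) = gram (x - y) (x - y)"
    unfolding gram_add_add gram_diff_diff by (simp add: smulZ_two algebra_simps)
  then show ?thesis unfolding zle_def using gram_pos by simp
qed

lemma gram_triangle:
  assumes "zle (gram x x) (rscale (a\<^sup>2) w)" "zle (gram y y) (rscale (b\<^sup>2) w)"
    and "0 \<le> a" "0 \<le> b" "w \<in> Zp"
  shows "zle (gram (x + y) (x + y)) (rscale ((a + b)\<^sup>2) w)"
proof (cases "a = 0 \<or> b = 0")
  case True
  have "gram x x = 0" if "a = 0"
    using assms(1) that zle_antisym zle_0_iff gram_pos by fastforce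
  moreover have "gram y y = 0" if "b = 0"
    using assms(2) that zle_antisym zle_0_iff gram_pos by fastforce
  ultimately show ?thesis using True assms(1,2) by (auto simp: gram_self_eq_0_iff)
next
  case False
  then have ab: "a > 0" "b > 0" using assms(3,4) by auto
  let ?c = "gram x y + gram y x"
  \<comment> \<open>\<open>ab [x + y, x + y] \<le> ab([x, x] + [y, y]) + b\<^sup>2[x, x] + a\<^sup>2[y, y] \<le> ab (a + b)\<^sup>2 w\<close>\<close>
  have c: "zle (rscale (a * b) ?c) (rscale (b\<^sup>2) (gram x x) + rscale (a\<^sup>2) (gram y y))"
    using gram_sym_sum_le[of b "- a" x y] by (simp add: mult.commute)
  have "rscale (a * b) (gram (x + y) (x + y))
      = rscale (a * b) (gram x x) + rscale (a * b) (gram y y) + rscale (a * b) ?c"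
    by (simp add: gram_add_add scale_right_distrib)
  then have "zle (rscale (a * b) (gram (x + y) (x + y)))
      (rscale (a * b) (gram x x) + rscale (a * b) (gram y y)
        + (rscale (b\<^sup>2) (gram x x) + rscale (a\<^sup>2) (gram y y)))"
    using zle_add[OF zle_refl c] by simp
  also have "\<dots> = rscale (a * b + b\<^sup>2) (gram x x) + rscale (a * b + a\<^sup>2) (gram y y)"
    by (simp add: scale_left_distrib)
  also have "zle \<dots> (rscale (a * b + b\<^sup>2) (rscale (a\<^sup>2) w) + rscale (a * b + a\<^sup>2) (rscale (b\<^sup>2) w))"
    using assms by (intro zle_add zle_rscale_mono) auto
  also have "\<dots> = rscale (a * b) (rscale ((a + b)\<^sup>2) w)"
  proof -
    have e: "(a * b + b\<^sup>2) * a\<^sup>2 + (a * b + a\<^sup>2) * b\<^sup>2 = a * b * (a + b)\<^sup>2"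
      by (simp add: power2_eq_square algebra_simps)
    have "rscale (a * b + b\<^sup>2) (rscale (a\<^sup>2) w) + rscale (a * b + a\<^sup>2) (rscale (b\<^sup>2) w)
        = rscale ((a * b + b\<^sup>2) * a\<^sup>2 + (a * b + a\<^sup>2) * b\<^sup>2) w"
      by (simp only: scale_scale of_real_mult of_real_add scale_left_distrib)
    then show ?thesis by (simp only: e rscale_rscale)
  qed
  finally have "zle (rscale (a * b) (gram (x + y) (x + y))) (rscale (a * b) (rscale ((a + b)\<^sup>2) w))" .
  then show ?thesis by (rule zle_rscale_cancel[rotated]) (use ab in simp)
qed

section \<open>Convergence in a Loynes space\<close>

lemma tendsto_addZ:
  fixes u v :: "'b \<Rightarrow> 'z"
  shows "(u \<longlongrightarrow> a) F \<Longrightarrow> (v \<longlongrightarrow> b) F \<Longrightarrow> ((\<lambda>x. u x + v x) \<longlongrightarrow> a + b) F"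
  by (rule tendsto_continuous2[where f="(+)", OF add_cont])

lemma tendsto_smulZ:
  fixes v :: "'b \<Rightarrow> 'z"
  shows "(u \<longlongrightarrow> a) F \<Longrightarrow> (v \<longlongrightarrow> b) F \<Longrightarrow> ((\<lambda>x. smulZ (u x) (v x)) \<longlongrightarrow> smulZ a b) F"
  by (rule tendsto_continuous2[where f=smulZ, OF smul_cont])

lemma tendsto_smulZ_const:
  fixes v :: "'b \<Rightarrow> 'z"
  shows "(v \<longlongrightarrow> b) F \<Longrightarrow> ((\<lambda>x. smulZ c (v x)) \<longlongrightarrow> smulZ c b) F"
  using tendsto_smulZ[OF tendsto_const] .

lemma tendsto_diffZ:
  fixes u v :: "'b \<Rightarrow> 'z"
  assumes "(u \<longlongrightarrow> a) F" "(v \<longlongrightarrow> b) F"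
  shows "((\<lambda>x. u x - v x) \<longlongrightarrow> a - b) F"
proof -
  have "((\<lambda>x. u x + smulZ (-1) (v x)) \<longlongrightarrow> a + smulZ (-1) b) F"
    using assms by (intro tendsto_addZ tendsto_smulZ_const)
  then show ?thesis by simp
qed

lemma rscale_tendsto_0: "f \<longlonglongrightarrow> 0 \<Longrightarrow> (\<lambda>n. rscale (f n) z) \<longlonglongrightarrow> 0"
  using tendsto_smulZ[OF tendsto_of_real tendsto_const, of f 0 sequentially z] by simp

lemma continuous2_diffZ: "continuous_on UNIV (\<lambda>p::'z \<times> 'z. fst p - snd p)"
  unfolding continuous_on_def
proof
  fix p :: "'z \<times> 'z"
  show "((\<lambda>p. fst p - snd p) \<longlongrightarrow> fst p - snd p) (at p within UNIV)"
    by (intro tendsto_diffZ tendsto_fst tendsto_snd tendsto_ident_at)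
qed

lemma continuous_smulZ: "continuous_on UNIV (smulZ c)"
  unfolding continuous_on_def by (auto intro: tendsto_smulZ_const tendsto_ident_at)

lemma tendsto_0_squeeze:
  assumes "\<And>x. zle 0 (z x)" "\<And>x. zle (z x) (w x)" "(w \<longlongrightarrow> 0) F"
  shows "(z \<longlongrightarrow> 0) F"
proof (rule topological_tendstoI)
  fix U :: "'z set" assume "open U" "0 \<in> U"
  from solid_base[OF this] obtain V where V: "nhds0_set V" "V \<subseteq> U" "solid_set Zp V" by blast
  from V(1) obtain W where W: "open W" "0 \<in> W" "W \<subseteq> V" unfolding nhds0_set_def by blast
  from topological_tendstoD[OF assms(3) W(1,2)] show "eventually (\<lambda>x. z x \<in> U) F"
    by (rule eventually_mono) (use W V assms(1,2) solid_setD in blast)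
qed

lemma tendsto_0_iff_nhds0_set:
  "((f :: 'b \<Rightarrow> 'z) \<longlongrightarrow> 0) F \<longleftrightarrow> (\<forall>V. nhds0_set V \<longrightarrow> eventually (\<lambda>x. f x \<in> V) F)"
proof
  assume "(f \<longlongrightarrow> 0) F"
  then show "\<forall>V. nhds0_set V \<longrightarrow> eventually (\<lambda>x. f x \<in> V) F"
    unfolding nhds0_set_def by (blast intro: topological_tendstoD eventually_mono)
next
  assume "\<forall>V. nhds0_set V \<longrightarrow> eventually (\<lambda>x. f x \<in> V) F"
  then show "(f \<longlongrightarrow> 0) F"
    unfolding nhds0_set_def by (blast intro: topological_tendstoI)
qed

definition gram_tendsto :: "(nat \<Rightarrow> 'h) \<Rightarrow> 'h \<Rightarrow> bool" where
  "gram_tendsto x a \<longleftrightarrow> (\<lambda>n. gram (x n - a) (x n - a)) \<longlonglongrightarrow> 0"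

lemma gram_tendsto_cauchy:
  assumes "\<And>V. nhds0_set V \<Longrightarrow> \<exists>N. \<forall>m\<ge>N. \<forall>n\<ge>N. gram (x m - x n) (x m - x n) \<in> V"
  shows "\<exists>a. gram_tendsto x a"
proof -
  let ?F = "filtermap x sequentially"
  have "\<forall>V. nhds0_set V \<longrightarrow> eventually (\<lambda>p. gram (fst p - snd p) (fst p - snd p) \<in> V) (?F \<times>\<^sub>F ?F)"
  proof (intro allI impI)
    fix V :: "'z set" assume "nhds0_set V"
    from assms[OF this] obtain N where N: "\<forall>m\<ge>N. \<forall>n\<ge>N. gram (x m - x n) (x m - x n) \<in> V"
      by blast
    let ?P = "\<lambda>y. \<exists>n\<ge>N. y = x n"
    have "eventually ?P ?F" unfolding eventually_filtermap eventually_sequentially by blast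
    then show "eventually (\<lambda>p. gram (fst p - snd p) (fst p - snd p) \<in> V) (?F \<times>\<^sub>F ?F)"
      unfolding eventually_prod_filter by (intro exI[of _ ?P]) (use N in auto)
  qed
  from gram_complete[OF _ this] obtain h where
    "\<forall>V. nhds0_set V \<longrightarrow> eventually (\<lambda>y. gram (y - h) (y - h) \<in> V) ?F"
    by (auto simp: filtermap_bot_iff)
  then have "(\<lambda>n. gram (x n - h) (x n - h)) \<longlonglongrightarrow> 0"
    unfolding tendsto_0_iff_nhds0_set by (simp add: eventually_filtermap)
  then show ?thesis unfolding gram_tendsto_def by blast
qed

lemma gram_tendsto_squeeze:
  "(\<And>n. zle (gram (x n - a) (x n - a)) (w n)) \<Longrightarrow> w \<longlonglongrightarrow> 0 \<Longrightarrow> gram_tendsto x a"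
  unfolding gram_tendsto_def by (rule tendsto_0_squeeze) (auto simp: zle_0_iff gram_pos)

lemma gram_tendsto_0_bound:
  "(\<And>n. zle (gram (x n) (x n)) (rscale (f n) z)) \<Longrightarrow> f \<longlonglongrightarrow> 0 \<Longrightarrow> gram_tendsto x 0"
  by (rule gram_tendsto_squeeze[where w="\<lambda>n. rscale (f n) z"]) (simp_all add: rscale_tendsto_0)

lemma gram_tendsto_add:
  assumes "gram_tendsto x a" "gram_tendsto y b"
  shows "gram_tendsto (\<lambda>n. x n + y n) (a + b)"
proof (rule gram_tendsto_squeeze)
  show "zle (gram (x n + y n - (a + b)) (x n + y n - (a + b)))
      (rscale 2 (gram (x n - a) (x n - a)) + rscale 2 (gram (y n - b) (y n - b)))" for n
    using gram_add_le[of "x n - a" "y n - b"] by (simp add: algebra_simps)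
  have "(\<lambda>n. rscale 2 (gram (x n - a) (x n - a)) + rscale 2 (gram (y n - b) (y n - b)))
      \<longlonglongrightarrow> rscale 2 0 + rscale 2 0"
    using assms unfolding gram_tendsto_def by (intro tendsto_addZ tendsto_smulZ_const)
  then show "(\<lambda>n. rscale 2 (gram (x n - a) (x n - a)) + rscale 2 (gram (y n - b) (y n - b))) \<longlonglongrightarrow> 0"
    by simp
qed

lemma gram_tendsto_bounded_op:
  assumes "\<And>y. zle (gram (L y) (L y)) (rscale C (gram y y))" "\<And>u v. L (u - v) = L u - L v"
    and "gram_tendsto x a"
  shows "gram_tendsto (\<lambda>n. L (x n)) (L a)"
proof (rule gram_tendsto_squeeze)
  show "zle (gram (L (x n) - L a) (L (x n) - L a)) (rscale C (gram (x n - a) (x n - a)))" for n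
    using assms(1,2) by metis
  show "(\<lambda>n. rscale C (gram (x n - a) (x n - a))) \<longlonglongrightarrow> 0"
    using tendsto_smulZ_const[OF assms(3)[unfolded gram_tendsto_def]] by simp
qed

lemma gram_tendsto_const: "gram_tendsto (\<lambda>n. a) a"
  unfolding gram_tendsto_def by simp

lemma gram_tendsto_unique:
  assumes "gram_tendsto x a" "gram_tendsto x b"
  shows "a = b"
proof -
  have "(\<lambda>n. gram (a - b) (a - b)) \<longlonglongrightarrow> 0"
  proof (rule tendsto_0_squeeze)
    show "zle (gram (a - b) (a - b))
        (rscale 2 (gram (x n - b) (x n - b)) + rscale 2 (gram (x n - a) (x n - a)))" for n
      using gram_add_le[of "x n - b" "- (x n - a)"] by (simp only: gram_neg_neg) simp
    show "zle 0 (gram (a - b) (a - b))" by (simp add: zle_0_iff gram_pos)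
    have "(\<lambda>n. rscale 2 (gram (x n - b) (x n - b)) + rscale 2 (gram (x n - a) (x n - a)))
        \<longlonglongrightarrow> rscale 2 0 + rscale 2 0"
      using assms unfolding gram_tendsto_def by (intro tendsto_addZ tendsto_smulZ_const)
    then show "(\<lambda>n. rscale 2 (gram (x n - b) (x n - b)) + rscale 2 (gram (x n - a) (x n - a)))
        \<longlonglongrightarrow> 0"
      by simp
  qed
  then have "gram (a - b) (a - b) = 0" using LIMSEQ_unique by blast
  then show ?thesis by (simp add: gram_self_eq_0_iff)
qed

lemma order_interval_nbhd:
  assumes "open U" "0 \<in> U"
  obtains W where "open W" "0 \<in> W" "\<And>u z. u \<in> W \<Longrightarrow> zle (- z) u \<Longrightarrow> zle z u \<Longrightarrow> z \<in> U"
proof -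
  from continuous2_open_nbhds[where f="(-)", OF continuous2_diffZ assms(1), of 0 0]
  obtain A B where AB: "open A" "open B" "0 \<in> A" "0 \<in> B" "\<forall>x\<in>A. \<forall>y\<in>B. x - y \<in> U"
    using assms(2) by auto
  from solid_base[of "A \<inter> B"] obtain V where V: "nhds0_set V" "V \<subseteq> A \<inter> B" "solid_set Zp V"
    using AB by auto
  from V(1) obtain V0 where V0: "open V0" "0 \<in> V0" "V0 \<subseteq> V" unfolding nhds0_set_def by blast
  show thesis
  proof
    show "open (V0 \<inter> smulZ 2 -` V0)" using V0(1) continuous_smulZ by (auto intro: open_vimage)
    show "0 \<in> V0 \<inter> smulZ 2 -` V0" using V0(2) by simp
    fix u z assume "u \<in> V0 \<inter> smulZ 2 -` V0" "zle (- z) u" "zle z u"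
    then have u: "u \<in> V" "u + u \<in> V" and "zle 0 (u + z)" "zle (u + z) (u + u)"
      using V0(3) unfolding zle_def by (auto simp: smulZ_two algebra_simps)
    then have "u + z \<in> V" using solid_setD[OF V(3)] by blast
    then have "(u + z) - u \<in> U" using AB(5) V(2) u by blast
    then show "z \<in> U" by simp
  qed
qed

lemma tendsto_gram_sym_sum_0:
  assumes "(\<lambda>n. gram (d n) (d n)) \<longlonglongrightarrow> 0"
  shows "(\<lambda>n. gram (d n) k + gram k (d n)) \<longlonglongrightarrow> 0"
proof (rule topological_tendstoI)
  fix U :: "'z set" assume "open U" "0 \<in> U"
  then obtain W where W: "open W" "0 \<in> W"
    and W_interval: "\<And>u z. u \<in> W \<Longrightarrow> zle (- z) u \<Longrightarrow> zle z u \<Longrightarrow> z \<in> U"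
    using order_interval_nbhd by blast
  from continuous2_open_nbhds[where f="(+)", OF add_cont W(1), of 0 0]
  obtain C D where CD: "open C" "open D" "0 \<in> C" "0 \<in> D" "\<forall>x\<in>C. \<forall>y\<in>D. x + y \<in> W"
    using W(2) by auto
  \<comment> \<open>bound \<open>\<plusminus>([d, k] + [k, d])\<close> by \<open>\<alpha>\<^sup>2 [d, d] + \<beta>\<^sup>2 [k, k]\<close> with \<open>\<alpha>\<beta> = 1\<close>,
    choosing \<open>\<beta>\<close> first to make the \<open>k\<close>-part small\<close>
  have "(\<lambda>N. rscale ((inverse (real (Suc N)))\<^sup>2) (gram k k)) \<longlonglongrightarrow> 0"
    using tendsto_power[OF LIMSEQ_inverse_real_of_nat, of 2] by (intro rscale_tendsto_0) simp
  from topological_tendstoD[OF this CD(2,4)] obtain N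
    where N: "rscale ((inverse (real (Suc N)))\<^sup>2) (gram k k) \<in> D"
    unfolding eventually_sequentially by blast
  define \<alpha> where "\<alpha> = real (Suc N)"
  define \<beta> where "\<beta> = inverse (real (Suc N))"
  have "\<alpha> * \<beta> = 1" unfolding \<alpha>_def \<beta>_def by simp
  have "(\<lambda>n. rscale (\<alpha>\<^sup>2) (gram (d n) (d n))) \<longlonglongrightarrow> 0"
    using tendsto_smulZ_const[OF assms] by simp
  from topological_tendstoD[OF this CD(1,3)]
  show "eventually (\<lambda>n. gram (d n) k + gram k (d n) \<in> U) sequentially"
  proof (rule eventually_mono)
    fix n assume n: "rscale (\<alpha>\<^sup>2) (gram (d n) (d n)) \<in> C"
    let ?u = "rscale (\<alpha>\<^sup>2) (gram (d n) (d n)) + rscale (\<beta>\<^sup>2) (gram k k)"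
    have "?u \<in> W" unfolding \<beta>_def using CD(5) N n by blast
    moreover have "zle (- (gram (d n) k + gram k (d n))) ?u" "zle (gram (d n) k + gram k (d n)) ?u"
      using gram_sym_sum_le[of \<alpha> \<beta> "d n" k] gram_sym_sum_le[of \<alpha> "- \<beta>" "d n" k] \<open>\<alpha> * \<beta> = 1\<close>
      by simp_all
    ultimately show "gram (d n) k + gram k (d n) \<in> U" by (rule W_interval)
  qed
qed

lemma tendsto_gram_0:
  assumes "(\<lambda>n. gram (d n) (d n)) \<longlonglongrightarrow> 0"
  shows "(\<lambda>n. gram (d n) k) \<longlonglongrightarrow> 0" "(\<lambda>n. gram k (d n)) \<longlonglongrightarrow> 0"
proof -
  define x where "x n = gram (d n) k" for n
  define y where "y n = gram k (d n)" for n
  \<comment> \<open>polarization: replacing \<open>k\<close> by \<open>\<i> k\<close> turns \<open>x + y\<close> into \<open>-\<i> (x - y)\<close>\<close>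
  have sum: "(\<lambda>n. x n + y n) \<longlonglongrightarrow> 0"
    unfolding x_def y_def by (rule tendsto_gram_sym_sum_0[OF assms])
  have "(\<lambda>n. gram (d n) (smulH \<i> k) + gram (smulH \<i> k) (d n)) \<longlonglongrightarrow> 0"
    by (rule tendsto_gram_sym_sum_0[OF assms])
  moreover have "gram (d n) (smulH \<i> k) + gram (smulH \<i> k) (d n) = smulZ (-\<i>) (x n - y n)" for n
    unfolding x_def y_def by (simp add: gram_smul gram_smul_right scale_right_diff_distrib)
  ultimately have "(\<lambda>n. smulZ \<i> (smulZ (-\<i>) (x n - y n))) \<longlonglongrightarrow> smulZ \<i> 0"
    by (intro tendsto_smulZ_const) simp
  then have diff: "(\<lambda>n. x n - y n) \<longlonglongrightarrow> 0" by simp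
  have "(\<lambda>n. smulZ (1/2) ((x n + y n) + (x n - y n))) \<longlonglongrightarrow> smulZ (1/2) (0 + 0)"
    by (intro tendsto_smulZ_const tendsto_addZ sum diff)
  moreover have "smulZ (1/2) ((x n + y n) + (x n - y n)) = x n" for n
  proof -
    have "(x n + y n) + (x n - y n) = smulZ 2 (x n)" by (simp add: smulZ_two)
    then show ?thesis by simp
  qed
  ultimately show "(\<lambda>n. gram (d n) k) \<longlonglongrightarrow> 0" unfolding x_def by simp
  have "(\<lambda>n. smulZ (1/2) ((x n + y n) - (x n - y n))) \<longlonglongrightarrow> smulZ (1/2) (0 - 0)"
    by (intro tendsto_smulZ_const tendsto_diffZ sum diff)
  moreover have "smulZ (1/2) ((x n + y n) - (x n - y n)) = y n" for n
  proof -
    have "(x n + y n) - (x n - y n) = smulZ 2 (y n)" by (simp add: smulZ_two)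
    then show ?thesis by simp
  qed
  ultimately show "(\<lambda>n. gram k (d n)) \<longlonglongrightarrow> 0" unfolding y_def by simp
qed

lemma tendsto_gram_left: "gram_tendsto x a \<Longrightarrow> (\<lambda>n. gram (x n) k) \<longlonglongrightarrow> gram a k"
  unfolding gram_tendsto_def
  using tendsto_addZ[OF tendsto_gram_0(1) tendsto_const, of "\<lambda>n. x n - a" k "gram a k"]
  by (simp add: gram_diff_left)

lemma tendsto_gram_right: "gram_tendsto x a \<Longrightarrow> (\<lambda>n. gram k (x n)) \<longlonglongrightarrow> gram k a"
  unfolding gram_tendsto_def
  using tendsto_addZ[OF tendsto_gram_0(2) tendsto_const, of "\<lambda>n. x n - a" k "gram k a"]
  by (simp add: gram_diff_right)

end

section \<open>The binomial series of \<open>(1 - x)\<^sup>-\<^sup>1\<^sup>/\<^sup>2\<close>\<close>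

lemma geometric_tail_le:
  fixes r :: real assumes "0 \<le> r" "r < 1"
  shows "(\<Sum>k\<in>{n..<m}. r^k) \<le> r^n / (1 - r)"
proof (cases "n < m")
  case False
  then show ?thesis using assms by simp
next
  case True
  then have e: "{n..<m} = {n..m-1}" by auto
  have "(1 - r) * (\<Sum>i=n..m-1. r^i) = r^n - r^Suc (m-1)"
    using True by (intro sum_gp_multiplied) simp
  also have "\<dots> \<le> r^n" using assms by simp
  finally have "(\<Sum>i=n..m-1. r^i) * (1 - r) \<le> r^n" by (simp add: mult.commute)
  then show ?thesis unfolding e using assms by (simp add: pos_le_divide_eq)
qed

text \<open>\<open>(1 - x)\<^sup>-\<^sup>1\<^sup>/\<^sup>2 = (\<Sum>n. inv_sqrt_coeff n * x\<^sup>n)\<close>; its square is the geometric series.\<close>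

definition inv_sqrt_coeff :: "nat \<Rightarrow> real" where
  "inv_sqrt_coeff n = (-1)^n * ((-1/2::real) gchoose n)"

lemma inv_sqrt_coeff_convolution: "(\<Sum>i\<le>k. inv_sqrt_coeff i * inv_sqrt_coeff (k - i)) = 1"
proof -
  have pt: "inv_sqrt_coeff i * inv_sqrt_coeff (k - i)
      = (-1)^k * (((-1/2::real) gchoose i) * ((-1/2) gchoose (k - i)))" if "i \<le> k" for i
  proof -
    have "inv_sqrt_coeff i * inv_sqrt_coeff (k - i)
        = ((-1)^i * (-1)^(k-i)) * (((-1/2::real) gchoose i) * ((-1/2) gchoose (k - i)))"
      unfolding inv_sqrt_coeff_def by (simp only: mult_ac)
    also have "(-1::real)^i * (-1)^(k-i) = (-1)^k" using that by (simp flip: power_add)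
    finally show ?thesis .
  qed
  have "(\<Sum>i\<le>k. inv_sqrt_coeff i * inv_sqrt_coeff (k - i))
      = (-1)^k * (\<Sum>i=0..k. ((-1/2::real) gchoose i) * ((-1/2) gchoose (k - i)))"
    unfolding sum_distrib_left atMost_atLeast0 by (rule sum.cong) (simp_all add: pt)
  also have "\<dots> = (-1)^k * ((-1::real) gchoose k)" by (simp add: gbinomial_Vandermonde)
  also have "((-1::real) gchoose k) = (-1)^k"
  proof -
    have "((-1::real) gchoose k) = (-1)^k * ((1 + of_nat k - 1) gchoose k)"
      using gbinomial_minus[of 1 k] by simp
    also have "((1::real) + of_nat k - 1) gchoose k = 1"
      using binomial_gbinomial[of k k, where 'a=real] by simp
    finally show ?thesis by simp
  qed
  finally show ?thesis by (simp flip: power_add)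
qed

lemma inv_sqrt_coeff_nonneg: "0 \<le> inv_sqrt_coeff n"
proof -
  have "inv_sqrt_coeff n = (-1)^n * ((-1)^n * ((of_nat n - (-1/2) - 1) gchoose n))"
    unfolding inv_sqrt_coeff_def by (subst gbinomial_negated_upper) simp
  also have "\<dots> = (of_nat n - 1/2) gchoose n" by (simp flip: power_add)
  also have "\<dots> = (\<Prod>i = 0..<n. (of_nat n - 1/2 - of_nat i) / of_nat (n - i))"
    by (rule gbinomial_altdef_of_nat)
  also have "\<dots> \<ge> 0" by (rule prod_nonneg) auto
  finally show ?thesis .
qed

lemma inv_sqrt_coeff_le_1: "inv_sqrt_coeff n \<le> 1"
proof -
  have "inv_sqrt_coeff 0 * inv_sqrt_coeff (n - 0) \<le> (\<Sum>i\<le>n. inv_sqrt_coeff i * inv_sqrt_coeff (n - i))"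
    by (rule member_le_sum) (auto intro: mult_nonneg_nonneg inv_sqrt_coeff_nonneg)
  moreover have "inv_sqrt_coeff 0 = 1" unfolding inv_sqrt_coeff_def by simp
  ultimately show ?thesis using inv_sqrt_coeff_convolution[of n] by simp
qed

definition inv_sqrt_poly :: "nat \<Rightarrow> real poly" where
  "inv_sqrt_poly N = (\<Sum>n<N. monom (inv_sqrt_coeff n) n)"

definition geom_poly :: "nat \<Rightarrow> real poly" where
  "geom_poly N = (\<Sum>n<N. monom 1 n)"

definition one_minus_x :: "real poly" where
  "one_minus_x = [:1, -1:]"

lemma coeff_inv_sqrt_poly: "coeff (inv_sqrt_poly N) i = (if i < N then inv_sqrt_coeff i else 0)"
  unfolding inv_sqrt_poly_def coeff_sum by (simp add: sum.delta')

lemma coeff_geom_poly: "coeff (geom_poly N) i = (if i < N then 1 else 0)"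
  unfolding geom_poly_def coeff_sum by (simp add: sum.delta')

lemma degree_inv_sqrt_poly: "degree (inv_sqrt_poly N) \<le> N"
  unfolding inv_sqrt_poly_def by (rule degree_sum_le) (auto intro: order.trans[OF degree_monom_le])

lemma degree_geom_poly: "degree (geom_poly N) \<le> N"
  unfolding geom_poly_def by (rule degree_sum_le) (auto intro: order.trans[OF degree_monom_le])

lemma monom_mult_one_minus_x: "monom 1 N * one_minus_x = monom 1 N - monom 1 (Suc N)"
  by (rule poly_eqI) (auto simp: coeff_monom_mult one_minus_x_def coeff_pCons' Suc_diff_le)

lemma geom_poly_mult_one_minus_x: "geom_poly N * one_minus_x = 1 - monom 1 N"
proof (induction N)
  case 0
  then show ?case by (simp add: geom_poly_def monom_0 one_pCons)
next
  case (Suc N)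
  have "geom_poly (Suc N) * one_minus_x = geom_poly N * one_minus_x + monom 1 N * one_minus_x"
    by (simp add: geom_poly_def distrib_right)
  then show ?case using Suc.IH monom_mult_one_minus_x by simp
qed

lemma inv_sqrt_poly_defect:
  "inv_sqrt_poly N * one_minus_x * inv_sqrt_poly N - 1
    = (inv_sqrt_poly N * inv_sqrt_poly N - geom_poly N) * one_minus_x - monom 1 N"
  using geom_poly_mult_one_minus_x[of N] by (simp add: algebra_simps)

lemma coeff_inv_sqrt_poly_square_minus_geom:
  "\<bar>coeff (inv_sqrt_poly N * inv_sqrt_poly N - geom_poly N) k\<bar> \<le> (if N \<le> k then 1 else 0)"
proof -
  have square: "coeff (inv_sqrt_poly N * inv_sqrt_poly N) k
      = (\<Sum>i\<le>k. coeff (inv_sqrt_poly N) i * coeff (inv_sqrt_poly N) (k - i))"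
    by (rule coeff_mult)
  show ?thesis
  proof (cases "k < N")
    case True
    then have "coeff (inv_sqrt_poly N * inv_sqrt_poly N) k = (\<Sum>i\<le>k. inv_sqrt_coeff i * inv_sqrt_coeff (k - i))"
      unfolding square coeff_inv_sqrt_poly by (intro sum.cong) auto
    then show ?thesis using True inv_sqrt_coeff_convolution[of k] by (simp add: coeff_geom_poly)
  next
    case False
    have "(\<Sum>i\<le>k. coeff (inv_sqrt_poly N) i * coeff (inv_sqrt_poly N) (k - i))
        \<le> (\<Sum>i\<le>k. inv_sqrt_coeff i * inv_sqrt_coeff (k - i))"
      unfolding coeff_inv_sqrt_poly by (intro sum_mono) (auto intro: mult_nonneg_nonneg inv_sqrt_coeff_nonneg)
    then have "coeff (inv_sqrt_poly N * inv_sqrt_poly N) k \<le> 1"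
      unfolding square inv_sqrt_coeff_convolution .
    moreover have "0 \<le> coeff (inv_sqrt_poly N * inv_sqrt_poly N) k"
      unfolding square coeff_inv_sqrt_poly by (intro sum_nonneg) (auto intro: mult_nonneg_nonneg inv_sqrt_coeff_nonneg)
    ultimately show ?thesis using False by (simp add: coeff_geom_poly)
  qed
qed

lemma degree_inv_sqrt_poly_square_minus_geom:
  "degree (inv_sqrt_poly N * inv_sqrt_poly N - geom_poly N) \<le> N + N"
  using degree_mult_le[of "inv_sqrt_poly N" "inv_sqrt_poly N"] degree_inv_sqrt_poly[of N] degree_geom_poly[of N]
  by (intro degree_diff_le) linarith+

section \<open>Polynomials in a self-adjoint contraction\<close>

locale sa_contraction = loynes_space smulZ invZ Zp smulH gram
  for smulZ :: "complex \<Rightarrow> 'z::{t2_space,ab_group_add} \<Rightarrow> 'z"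
  and invZ :: "'z \<Rightarrow> 'z" and Zp :: "'z set"
  and smulH :: "complex \<Rightarrow> 'h::ab_group_add \<Rightarrow> 'h"
  and gram :: "'h \<Rightarrow> 'h \<Rightarrow> 'z" +
  fixes X :: "'h \<Rightarrow> 'h" and r :: real
  assumes X_add: "X (x + y) = X x + X y"
    and X_smul: "X (smulH c x) = smulH c (X x)"
    and X_self_adjoint: "gram (X x) y = gram x (X y)"
    and X_bound: "zle (gram (X x) (X x)) (rscale (r\<^sup>2) (gram x x))"
    and r_nonneg: "0 \<le> r" and r_less_1: "r < 1"
begin

lemma X_0: "X 0 = 0"
  using X_add[of 0 0] by simp

lemma X_sum: "X (\<Sum>i\<in>A. f i) = (\<Sum>i\<in>A. X (f i))"
  by (induction A rule: infinite_finite_induct) (simp_all add: X_0 X_add)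

definition poly_op :: "real poly \<Rightarrow> 'h \<Rightarrow> 'h" where
  "poly_op p h = (\<Sum>i\<le>degree p. smulH (complex_of_real (coeff p i)) ((X ^^ i) h))"

lemma poly_op_eq_sum:
  "degree p < N \<Longrightarrow> poly_op p h = (\<Sum>i<N. smulH (complex_of_real (coeff p i)) ((X ^^ i) h))"
  unfolding poly_op_def by (rule sum.mono_neutral_left) (auto simp: coeff_eq_0)

lemma poly_op_add: "poly_op (p + q) h = poly_op p h + poly_op q h"
proof -
  define N where "N = Suc (max (degree p) (degree q))"
  have "degree (p + q) < N"
    unfolding N_def using degree_add_le[of p "max (degree p) (degree q)" q] by simp
  then show ?thesis using poly_op_eq_sum[of p N] poly_op_eq_sum[of q N] poly_op_eq_sum[of "p + q" N]
    unfolding N_def by (simp add: H.scale_left_distrib sum.distrib)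
qed

lemma poly_op_smult: "poly_op (smult a p) h = smulH (complex_of_real a) (poly_op p h)"
proof -
  have "degree (smult a p) < Suc (degree p)" using degree_smult_le[of a p] by simp
  then show ?thesis
    using poly_op_eq_sum[of p "Suc (degree p)"] poly_op_eq_sum[of "smult a p" "Suc (degree p)"]
    by (simp add: H.scale_sum_right del: sum.lessThan_Suc)
qed

lemma poly_op_diff: "poly_op (p - q) h = poly_op p h - poly_op q h"
  using poly_op_add[of p "- q" h] poly_op_smult[of "-1" q h] by simp

lemma poly_op_pCons_0: "poly_op (pCons 0 p) h = X (poly_op p h)"
proof -
  have "degree (pCons 0 p) < Suc (Suc (degree p))" using degree_pCons_le[of 0 p] by simp
  then have "poly_op (pCons 0 p) h
      = (\<Sum>i<Suc (Suc (degree p)). smulH (complex_of_real (coeff (pCons 0 p) i)) ((X ^^ i) h))"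
    by (rule poly_op_eq_sum)
  also have "\<dots> = (\<Sum>i<Suc (degree p). smulH (complex_of_real (coeff p i)) ((X ^^ Suc i) h))"
    by (subst sum.lessThan_Suc_shift) simp
  also have "\<dots> = X (poly_op p h)"
    using poly_op_eq_sum[of p "Suc (degree p)" h] by (simp add: X_sum X_smul del: sum.lessThan_Suc)
  finally show ?thesis .
qed

lemma poly_op_const: "poly_op [:a:] h = smulH (complex_of_real a) h"
  unfolding poly_op_def by simp

lemma poly_op_pCons: "poly_op (pCons a p) h = smulH (complex_of_real a) h + X (poly_op p h)"
proof -
  have "pCons a p = [:a:] + pCons 0 p" by simp
  then show ?thesis by (simp only: poly_op_add poly_op_const poly_op_pCons_0)
qed

lemma poly_op_0: "poly_op 0 h = 0"
  unfolding poly_op_def by simp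

lemma poly_op_1: "poly_op 1 h = h"
  using poly_op_const[of 1 h] by (simp add: one_pCons)

lemma poly_op_one_minus_x: "poly_op one_minus_x h = h - X h"
  using X_smul[of "-1" h] unfolding one_minus_x_def by (simp add: poly_op_pCons poly_op_0 X_0)

lemma poly_op_add_vec: "poly_op p (x + y) = poly_op p x + poly_op p y"
  by (induction p) (simp_all add: poly_op_pCons poly_op_0 X_add H.scale_right_distrib algebra_simps)

lemma poly_op_diff_vec: "poly_op p (x - y) = poly_op p x - poly_op p y"
  using poly_op_add_vec[of p "x - y" y] by (simp add: algebra_simps)

lemma poly_op_smul_vec: "poly_op p (smulH c x) = smulH c (poly_op p x)"
  by (induction p) (simp_all add: poly_op_pCons poly_op_0 X_smul H.scale_right_distrib H.scale_left_commute)

lemma poly_op_mult: "poly_op (p * q) h = poly_op p (poly_op q h)"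
  by (induction p) (simp_all add: poly_op_0 poly_op_add poly_op_smult poly_op_pCons_0 poly_op_pCons)

lemma poly_op_commute:
  assumes "\<And>x y. L (x + y) = L x + L y" "\<And>c x. L (smulH c x) = smulH c (L x)"
    and "\<And>x. L (X x) = X (L x)"
  shows "L (poly_op p h) = poly_op p (L h)"
proof (induction p)
  case 0
  have "L 0 = 0" using assms(1)[of 0 0] by simp
  then show ?case by (simp add: poly_op_0)
next
  case (pCons a p)
  then show ?case by (simp add: poly_op_pCons assms)
qed

lemma poly_op_X: "poly_op p (X h) = X (poly_op p h)"
  by (rule poly_op_commute[symmetric]) (simp_all add: X_add X_smul)

lemma poly_op_self_adjoint: "gram (poly_op p h) k = gram h (poly_op p k)"
proof (induction p arbitrary: h k)
  case 0
  then show ?case by (simp add: poly_op_0)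
next
  case (pCons a p)
  have "gram (poly_op (pCons a p) h) k = rscale a (gram h k) + gram (poly_op p h) (X k)"
    by (simp add: poly_op_pCons gram_add gram_rscale_left X_self_adjoint)
  also have "\<dots> = rscale a (gram h k) + gram h (poly_op p (X k))" by (simp add: pCons.IH)
  also have "\<dots> = gram h (poly_op (pCons a p) k)"
    by (simp add: poly_op_pCons gram_add_right gram_rscale_right poly_op_X)
  finally show ?case .
qed

definition poly_norm :: "real poly \<Rightarrow> real" where
  "poly_norm p = (\<Sum>i\<le>degree p. \<bar>coeff p i\<bar> * r^i)"

lemma poly_norm_eq_sum: "degree p < N \<Longrightarrow> poly_norm p = (\<Sum>i<N. \<bar>coeff p i\<bar> * r^i)"
  unfolding poly_norm_def by (rule sum.mono_neutral_left) (auto simp: coeff_eq_0)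

lemma poly_norm_nonneg: "0 \<le> poly_norm p"
  unfolding poly_norm_def using r_nonneg by (intro sum_nonneg) simp

lemma poly_norm_pCons: "poly_norm (pCons a p) = \<bar>a\<bar> + r * poly_norm p"
proof -
  have "degree (pCons a p) < Suc (Suc (degree p))" using degree_pCons_le[of a p] by simp
  then have "poly_norm (pCons a p) = (\<Sum>i<Suc (Suc (degree p)). \<bar>coeff (pCons a p) i\<bar> * r^i)"
    by (rule poly_norm_eq_sum)
  also have "\<dots> = \<bar>a\<bar> + (\<Sum>i<Suc (degree p). \<bar>coeff p i\<bar> * r^Suc i)"
    by (subst sum.lessThan_Suc_shift) simp
  also have "\<dots> = \<bar>a\<bar> + r * poly_norm p"
    using poly_norm_eq_sum[of p "Suc (degree p)"]
    by (simp add: sum_distrib_left mult_ac del: sum.lessThan_Suc)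
  finally show ?thesis .
qed

lemma poly_op_bound: "zle (gram (poly_op p h) (poly_op p h)) (rscale ((poly_norm p)\<^sup>2) (gram h h))"
proof (induction p)
  case 0
  then show ?case by (simp add: poly_op_0 poly_norm_def zle_refl)
next
  case (pCons a p)
  have "zle (gram (X (poly_op p h)) (X (poly_op p h))) (rscale (r\<^sup>2) (gram (poly_op p h) (poly_op p h)))"
    by (rule X_bound)
  also have "zle \<dots> (rscale (r\<^sup>2) (rscale ((poly_norm p)\<^sup>2) (gram h h)))"
    by (rule zle_rscale_mono[OF pCons.IH]) simp
  also have "\<dots> = rscale ((r * poly_norm p)\<^sup>2) (gram h h)"
    by (simp only: rscale_rscale power_mult_distrib)
  finally have "zle (gram (X (poly_op p h)) (X (poly_op p h))) (rscale ((r * poly_norm p)\<^sup>2) (gram h h))" .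
  moreover have "zle (gram (smulH (complex_of_real a) h) (smulH (complex_of_real a) h))
      (rscale (\<bar>a\<bar>\<^sup>2) (gram h h))"
    by (simp add: gram_smul_smul zle_refl)
  ultimately show ?case
    unfolding poly_op_pCons poly_norm_pCons
    by (intro gram_triangle) (simp_all add: r_nonneg poly_norm_nonneg gram_pos)
qed

lemma poly_op_bound_le:
  assumes "poly_norm p \<le> c"
  shows "zle (gram (poly_op p h) (poly_op p h)) (rscale (c\<^sup>2) (gram h h))"
  using poly_op_bound
  by (rule zle_trans) (intro zle_rscale_left_mono gram_pos power_mono assms poly_norm_nonneg)

lemma poly_norm_le:
  assumes "degree p < N" "\<And>i. i < N \<Longrightarrow> \<bar>coeff p i\<bar> \<le> b i"
  shows "poly_norm p \<le> (\<Sum>i<N. b i * r^i)"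
  unfolding poly_norm_eq_sum[OF assms(1)] using assms(2) r_nonneg
  by (intro sum_mono mult_right_mono) auto

lemma poly_norm_diff: "poly_norm (p - q) \<le> poly_norm p + poly_norm q"
proof -
  define N where "N = Suc (max (degree p) (degree q))"
  have "degree (p - q) < N"
    unfolding N_def using degree_diff_le[of p "max (degree p) (degree q)" q] by simp
  then have "poly_norm (p - q) \<le> (\<Sum>i<N. (\<bar>coeff p i\<bar> + \<bar>coeff q i\<bar>) * r^i)"
    by (rule poly_norm_le) (simp add: abs_triangle_ineq4)
  also have "\<dots> = poly_norm p + poly_norm q"
    using poly_norm_eq_sum[of p N] poly_norm_eq_sum[of q N] unfolding N_def
    by (simp add: distrib_right sum.distrib del: sum.lessThan_Suc)
  finally show ?thesis .
qed

lemma poly_norm_mult_one_minus_x: "poly_norm (p * one_minus_x) \<le> (1 + r) * poly_norm p"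
proof -
  have "p * one_minus_x = p - pCons 0 p" unfolding one_minus_x_def by (simp add: algebra_simps)
  then have "poly_norm (p * one_minus_x) \<le> poly_norm p + poly_norm (pCons 0 p)"
    using poly_norm_diff by simp
  also have "\<dots> = (1 + r) * poly_norm p" by (simp add: poly_norm_pCons algebra_simps)
  finally show ?thesis .
qed

lemma poly_norm_monom: "poly_norm (monom 1 N) = r^N"
proof -
  have "poly_norm (monom 1 N) = (\<Sum>i<Suc N. \<bar>coeff (monom (1::real) N) i\<bar> * r^i)"
    by (rule poly_norm_eq_sum) (simp add: degree_monom_eq)
  also have "\<dots> = (\<Sum>i<Suc N. if N = i then r^N else 0)"
    by (rule sum.cong) auto
  finally show ?thesis by simp
qed

lemma poly_norm_tail_le:
  assumes "degree p < M" "\<And>i. \<bar>coeff p i\<bar> \<le> (if n \<le> i then 1 else 0)"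
  shows "poly_norm p \<le> r^n / (1 - r)"
proof -
  have "poly_norm p \<le> (\<Sum>i<M. (if n \<le> i then 1 else 0) * r^i)"
    using assms by (intro poly_norm_le) auto
  also have "\<dots> = (\<Sum>i\<in>{n..<M}. r^i)"
    by (rule sum.mono_neutral_cong_right) auto
  also have "\<dots> \<le> r^n / (1 - r)" by (rule geometric_tail_le[OF r_nonneg r_less_1])
  finally show ?thesis .
qed

lemma poly_norm_inv_sqrt_poly: "poly_norm (inv_sqrt_poly N) \<le> 1 / (1 - r)"
  using poly_norm_tail_le[of "inv_sqrt_poly N" "Suc N" 0] degree_inv_sqrt_poly[of N]
  by (simp add: coeff_inv_sqrt_poly inv_sqrt_coeff_le_1 inv_sqrt_coeff_nonneg)

lemma poly_norm_inv_sqrt_poly_diff: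
  "n \<le> m \<Longrightarrow> poly_norm (inv_sqrt_poly m - inv_sqrt_poly n) \<le> r^n / (1 - r)"
  using degree_diff_le[of "inv_sqrt_poly m" m "inv_sqrt_poly n"] degree_inv_sqrt_poly[of m] degree_inv_sqrt_poly[of n]
  by (intro poly_norm_tail_le[where M="Suc m"]) (auto simp: coeff_inv_sqrt_poly inv_sqrt_coeff_le_1 inv_sqrt_coeff_nonneg)

lemma poly_norm_inv_sqrt_poly_defect:
  "poly_norm (inv_sqrt_poly N * one_minus_x * inv_sqrt_poly N - 1) \<le> (1 + r) * (r^N / (1 - r)) + r^N"
proof -
  let ?D = "inv_sqrt_poly N * inv_sqrt_poly N - geom_poly N"
  have "poly_norm ?D \<le> r^N / (1 - r)"
    using degree_inv_sqrt_poly_square_minus_geom[of N] coeff_inv_sqrt_poly_square_minus_geom[of N]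
    by (intro poly_norm_tail_le[where M="Suc (N + N)"]) auto
  then have "(1 + r) * poly_norm ?D \<le> (1 + r) * (r^N / (1 - r))"
    using r_nonneg by (intro mult_left_mono) simp_all
  moreover have "poly_norm (inv_sqrt_poly N * one_minus_x * inv_sqrt_poly N - 1) \<le> (1 + r) * poly_norm ?D + r^N"
    unfolding inv_sqrt_poly_defect
    using poly_norm_diff[of "?D * one_minus_x" "monom 1 N"] poly_norm_mult_one_minus_x[of ?D]
    by (simp add: poly_norm_monom)
  ultimately show ?thesis by linarith
qed

section \<open>The inverse square root of \<open>1 - X\<close>\<close>

definition inv_sqrt_approx :: "nat \<Rightarrow> 'h \<Rightarrow> 'h" where
  "inv_sqrt_approx N h = poly_op (inv_sqrt_poly N) h"

lemma r_power_tendsto_0: "(\<lambda>n. r^n) \<longlonglongrightarrow> 0"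
  using r_nonneg r_less_1 by (intro LIMSEQ_power_zero) simp

lemma geometric_tail_tendsto_0: "(\<lambda>n. r^n / (1 - r)) \<longlonglongrightarrow> 0"
  using tendsto_divide[OF r_power_tendsto_0 tendsto_const, of "1 - r"] r_less_1 by simp

lemma inv_sqrt_approx_diff_bound:
  assumes "N \<le> m" "N \<le> n"
  shows "zle (gram (inv_sqrt_approx m h - inv_sqrt_approx n h) (inv_sqrt_approx m h - inv_sqrt_approx n h))
      (rscale ((r^N / (1 - r))\<^sup>2) (gram h h))"
proof -
  have *: "zle (gram (inv_sqrt_approx m h - inv_sqrt_approx n h) (inv_sqrt_approx m h - inv_sqrt_approx n h))
      (rscale ((r^N / (1 - r))\<^sup>2) (gram h h))" if "N \<le> n" "n \<le> m" for m n
  proof -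
    have "poly_norm (inv_sqrt_poly m - inv_sqrt_poly n) \<le> r^n / (1 - r)"
      by (rule poly_norm_inv_sqrt_poly_diff[OF that(2)])
    also have "\<dots> \<le> r^N / (1 - r)"
      using r_nonneg r_less_1 that(1) by (intro divide_right_mono power_decreasing) simp_all
    finally show ?thesis unfolding inv_sqrt_approx_def poly_op_diff[symmetric] by (rule poly_op_bound_le)
  qed
  show ?thesis
  proof (cases "n \<le> m")
    case True
    then show ?thesis using * assms by blast
  next
    case False
    then have "zle (gram (inv_sqrt_approx n h - inv_sqrt_approx m h) (inv_sqrt_approx n h - inv_sqrt_approx m h))
        (rscale ((r^N / (1 - r))\<^sup>2) (gram h h))"
      using False assms by (intro *) auto
    moreover have "inv_sqrt_approx m h - inv_sqrt_approx n h = - (inv_sqrt_approx n h - inv_sqrt_approx m h)" by simp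
    ultimately show ?thesis by (simp only: gram_neg_neg)
  qed
qed

lemma inv_sqrt_approx_cauchy:
  assumes "nhds0_set V"
  shows "\<exists>N. \<forall>m\<ge>N. \<forall>n\<ge>N. gram (inv_sqrt_approx m h - inv_sqrt_approx n h) (inv_sqrt_approx m h - inv_sqrt_approx n h) \<in> V"
proof -
  from assms obtain W where W: "open W" "0 \<in> W" "W \<subseteq> V" unfolding nhds0_set_def by blast
  from solid_base[OF W(1,2)] obtain V' where V': "nhds0_set V'" "V' \<subseteq> W" "solid_set Zp V'" by blast
  from V'(1) obtain W' where W': "open W'" "0 \<in> W'" "W' \<subseteq> V'" unfolding nhds0_set_def by blast
  have "(\<lambda>n. rscale ((r^n / (1 - r))\<^sup>2) (gram h h)) \<longlonglongrightarrow> 0"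
    using tendsto_power[OF geometric_tail_tendsto_0, of 2] by (intro rscale_tendsto_0) simp
  from topological_tendstoD[OF this W'(1,2)] obtain N
    where N: "rscale ((r^N / (1 - r))\<^sup>2) (gram h h) \<in> V'"
    unfolding eventually_sequentially using W' by blast
  have "gram (inv_sqrt_approx m h - inv_sqrt_approx n h) (inv_sqrt_approx m h - inv_sqrt_approx n h) \<in> V'"
    if "N \<le> m" "N \<le> n" for m n
    using solid_setD[OF V'(3) _ inv_sqrt_approx_diff_bound[OF that] N] gram_pos by (simp add: zle_0_iff)
  then show ?thesis using V'(2) W(3) by blast
qed

definition inv_sqrt :: "'h \<Rightarrow> 'h" where
  "inv_sqrt h = (SOME a. gram_tendsto (\<lambda>N. inv_sqrt_approx N h) a)"

lemma inv_sqrt_limit: "gram_tendsto (\<lambda>N. inv_sqrt_approx N h) (inv_sqrt h)"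
  unfolding inv_sqrt_def using gram_tendsto_cauchy[OF inv_sqrt_approx_cauchy] by (rule someI_ex)

lemma inv_sqrt_eqI: "gram_tendsto (\<lambda>N. inv_sqrt_approx N h) a \<Longrightarrow> inv_sqrt h = a"
  using inv_sqrt_limit gram_tendsto_unique by blast

lemma inv_sqrt_add: "inv_sqrt (x + y) = inv_sqrt x + inv_sqrt y"
  using gram_tendsto_add[OF inv_sqrt_limit inv_sqrt_limit, of x y]
  by (intro inv_sqrt_eqI) (simp add: inv_sqrt_approx_def poly_op_add_vec)

lemma inv_sqrt_commute:
  assumes "\<And>x y. L (x + y) = L x + L y" "\<And>c x. L (smulH c x) = smulH c (L x)"
    and "\<And>x. L (X x) = X (L x)" "\<And>y. zle (gram (L y) (L y)) (rscale C (gram y y))"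
  shows "inv_sqrt (L h) = L (inv_sqrt h)"
proof (rule inv_sqrt_eqI)
  have "L (u - v) = L u - L v" for u v
    using assms(1)[of "u - v" v] by (simp add: algebra_simps)
  then have "gram_tendsto (\<lambda>N. L (inv_sqrt_approx N h)) (L (inv_sqrt h))"
    by (rule gram_tendsto_bounded_op[OF assms(4) _ inv_sqrt_limit])
  then show "gram_tendsto (\<lambda>N. inv_sqrt_approx N (L h)) (L (inv_sqrt h))"
    unfolding inv_sqrt_approx_def using poly_op_commute[OF assms(1-3)] by simp
qed

lemma inv_sqrt_smul: "inv_sqrt (smulH c x) = smulH c (inv_sqrt x)"
  by (rule inv_sqrt_commute[where C="(cmod c)\<^sup>2"])
    (simp_all add: H.scale_right_distrib X_smul H.scale_left_commute gram_smul_smul zle_refl)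

lemma inv_sqrt_self_adjoint: "gram (inv_sqrt h) k = gram h (inv_sqrt k)"
proof -
  have "(\<lambda>N. gram (inv_sqrt_approx N h) k) \<longlonglongrightarrow> gram (inv_sqrt h) k"
    by (rule tendsto_gram_left[OF inv_sqrt_limit])
  moreover have "(\<lambda>N. gram (inv_sqrt_approx N h) k) \<longlonglongrightarrow> gram h (inv_sqrt k)"
    using tendsto_gram_right[OF inv_sqrt_limit] unfolding inv_sqrt_approx_def
    by (simp add: poly_op_self_adjoint)
  ultimately show ?thesis using LIMSEQ_unique by blast
qed

lemma inv_sqrt_one_minus_X: "inv_sqrt (h - X h) = inv_sqrt h - X (inv_sqrt h)"
  using inv_sqrt_commute[OF poly_op_add_vec poly_op_smul_vec poly_op_X poly_op_bound, of one_minus_x h]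
  by (simp add: poly_op_one_minus_x)

lemma inv_sqrt_one_minus_X_inv_sqrt: "inv_sqrt (y - X y) = h" if "y = inv_sqrt h"
proof -
  let ?p = "\<lambda>N. inv_sqrt_poly N * one_minus_x"
  let ?K = "(1 + r) * (1 / (1 - r))"
  \<comment> \<open>\<open>p\<^sub>N(X)(1 - X) y = p\<^sub>N(X)(1 - X)(y - p\<^sub>N(X) h) + (p\<^sub>N(X)(1 - X)p\<^sub>N(X) - 1) h + h\<close>\<close>
  have c1: "gram_tendsto (\<lambda>N. poly_op (?p N) (y - inv_sqrt_approx N h)) 0"
  proof (rule gram_tendsto_squeeze)
    show "zle (gram (poly_op (?p N) (y - inv_sqrt_approx N h) - 0) (poly_op (?p N) (y - inv_sqrt_approx N h) - 0))
        (rscale (?K\<^sup>2) (gram (inv_sqrt_approx N h - y) (inv_sqrt_approx N h - y)))" for N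
    proof -
      have "poly_norm (?p N) \<le> ?K"
        using r_nonneg
        by (intro order.trans[OF poly_norm_mult_one_minus_x] mult_left_mono poly_norm_inv_sqrt_poly) simp
      moreover have "gram (inv_sqrt_approx N h - y) (inv_sqrt_approx N h - y)
          = gram (y - inv_sqrt_approx N h) (y - inv_sqrt_approx N h)"
        using gram_neg_neg[of "y - inv_sqrt_approx N h"] by simp
      ultimately show ?thesis unfolding diff_zero by (simp only: poly_op_bound_le)
    qed
    show "(\<lambda>N. rscale (?K\<^sup>2) (gram (inv_sqrt_approx N h - y) (inv_sqrt_approx N h - y))) \<longlonglongrightarrow> 0"
      using tendsto_smulZ_const[OF inv_sqrt_limit[of h, unfolded gram_tendsto_def]] that by simp
  qed
  have "(\<lambda>N. ((1 + r) * (r^N / (1 - r)) + r^N)\<^sup>2) \<longlonglongrightarrow> ((1 + r) * 0 + 0)\<^sup>2"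
    by (intro tendsto_intros geometric_tail_tendsto_0 r_power_tendsto_0)
  then have c2: "gram_tendsto (\<lambda>N. poly_op (?p N * inv_sqrt_poly N - 1) h) 0"
    by (intro gram_tendsto_0_bound[OF poly_op_bound_le[OF poly_norm_inv_sqrt_poly_defect]]) simp
  have "gram_tendsto
      (\<lambda>N. h + (poly_op (?p N) (y - inv_sqrt_approx N h) + poly_op (?p N * inv_sqrt_poly N - 1) h)) (h + (0 + 0))"
    by (intro gram_tendsto_add gram_tendsto_const c1 c2)
  moreover have "h + (poly_op (?p N) (y - inv_sqrt_approx N h) + poly_op (?p N * inv_sqrt_poly N - 1) h)
      = inv_sqrt_approx N (poly_op one_minus_x y)" for N
    unfolding inv_sqrt_approx_def poly_op_diff_vec poly_op_diff poly_op_1 poly_op_mult[symmetric]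
    by (simp add: mult.assoc)
  ultimately have "inv_sqrt (poly_op one_minus_x y) = h" by (intro inv_sqrt_eqI) simp
  then show ?thesis by (simp add: poly_op_one_minus_x)
qed

end

section \<open>Partial gramian isometries from pairs of projections\<close>

context loynes_space
begin

lemma linear_iff:
  "Vector_Spaces.linear smulH smulH L
    \<longleftrightarrow> (\<forall>x y. L (x + y) = L x + L y) \<and> (\<forall>c x. L (smulH c x) = smulH c (L x))"
proof -
  have "vector_space smulH" unfolding vector_space_def using H.vector_space_assms by auto
  then show ?thesis using Vector_Spaces.linear_iff[of smulH smulH L] by auto
qed

lemma adjoint_eqI:
  assumes "is_adjoint smulH gram T S"
  shows "adjoint smulH gram T = S"
  unfolding adjoint_def
proof (rule some_equality)
  show "is_adjoint smulH gram T S" by (fact assms)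
  fix S' assume "is_adjoint smulH gram T S'"
  then have "gram h (S' k - S k) = 0" for h k
    using assms unfolding is_adjoint_def by (simp add: gram_diff_right)
  then show "S' = S" using gram_self_eq_0_iff by (metis eq_iff_diff_eq_0 ext)
qed

lemma bounded_byD: "bounded_by smulZ Zp gram T M \<Longrightarrow> zle (gram (T h) (T h)) (rscale (M\<^sup>2) (gram h h))"
  unfolding bounded_by_def zle_def by blast

lemma bounded_by_diff:
  assumes "bounded_by smulZ Zp gram T a" "bounded_by smulZ Zp gram S b"
  shows "bounded_by smulZ Zp gram (\<lambda>h. T h - S h) (a + b)"
proof -
  have "zle (gram (T h + - S h) (T h + - S h)) (rscale ((a + b)\<^sup>2) (gram h h))" for h
    using assms by (intro gram_triangle bounded_byD) (auto simp: gram_neg_neg bounded_by_def gram_pos)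
  then show ?thesis using assms unfolding bounded_by_def zle_def by simp
qed

lemma gram_sa_projectionD:
  assumes "gram_sa_projection smulZ Zp smulH gram P"
  shows "P (x + y) = P x + P y" "P (x - y) = P x - P y" "P (smulH c x) = smulH c (P x)"
    and "gram (P x) y = gram x (P y)" "P (P x) = P x" "\<exists>M. bounded_by smulZ Zp gram P M"
proof -
  from assms have lin: "Vector_Spaces.linear smulH smulH P"
    and ex: "\<exists>S. is_adjoint smulH gram P S" and adj: "adjoint smulH gram P = P"
    and idem: "P \<circ> P = P" and bd: "\<exists>M. bounded_by smulZ Zp gram P M"
    unfolding gram_sa_projection_def Bstar_def Bops_def by auto
  from ex have "is_adjoint smulH gram P (adjoint smulH gram P)"
    unfolding adjoint_def by (rule someI_ex)
  then show "gram (P x) y = gram x (P y)" unfolding adj is_adjoint_def by blast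
  have add: "\<forall>x y. P (x + y) = P x + P y" using lin linear_iff by blast
  then show "P (x + y) = P x + P y" by blast
  show "P (x - y) = P x - P y" using add[rule_format, of "x - y" y] by (simp add: algebra_simps)
  show "P (smulH c x) = smulH c (P x)" using lin linear_iff by blast
  show "P (P x) = P x" using idem by (simp add: fun_eq_iff)
  show "\<exists>M. bounded_by smulZ Zp gram P M" by (fact bd)
qed

lemma accessible_kernel:
  assumes "gram_sa_projection smulZ Zp smulH gram P"
  shows "accessible smulH gram {h. P h = 0}"
  unfolding accessible_def
proof (intro conjI allI)
  note P = gram_sa_projectionD[OF assms]
  have "P 0 = 0" using P(2)[of 0 0] by simp
  then show "H.subspace {h. P h = 0}" unfolding H.subspace_def by (simp add: P(1,3))
  fix h
  have "h - P h \<in> {h. P h = 0}" by (simp add: P(2,5))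
  moreover have "P h \<in> gram_orth gram {h. P h = 0}" unfolding gram_orth_def by (simp add: P(4))
  ultimately show "\<exists>m\<in>{h. P h = 0}. \<exists>n\<in>gram_orth gram {h. P h = 0}. h = m + n"
    by (metis diff_add_cancel)
qed

lemma accessible_range:
  assumes "gram_sa_projection smulZ Zp smulH gram Q"
  shows "accessible smulH gram (range Q)"
  unfolding accessible_def
proof (intro conjI allI)
  note Q = gram_sa_projectionD[OF assms]
  have "Q 0 = 0" using Q(2)[of 0 0] by simp
  show "H.subspace (range Q)"
    unfolding H.subspace_def
  proof (intro conjI ballI allI)
    show "0 \<in> range Q" using \<open>Q 0 = 0\<close> by (metis rangeI)
    show "x + y \<in> range Q" if "x \<in> range Q" "y \<in> range Q" for x y
    proof -
      from that obtain a b where "x = Q a" "y = Q b" by blast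
      then have "x + y = Q (a + b)" by (simp add: Q(1))
      then show ?thesis by blast
    qed
    show "smulH c x \<in> range Q" if "x \<in> range Q" for c x
    proof -
      from that obtain a where "x = Q a" by blast
      then have "smulH c x = Q (smulH c a)" by (simp add: Q(3))
      then show ?thesis by blast
    qed
  qed
  fix h
  have "h - Q h \<in> gram_orth gram (range Q)"
    unfolding gram_orth_def by (auto simp: gram_diff_left Q(4,5))
  then show "\<exists>m\<in>range Q. \<exists>n\<in>gram_orth gram (range Q). h = m + n"
    by (metis add.commute diff_add_cancel rangeI)
qed

lemma kernel_range_of_adjoint_products:
  assumes P: "gram_sa_projection smulZ Zp smulH gram P"
    and T: "Vector_Spaces.linear smulH smulH T" "is_adjoint smulH gram T S"
    and ST: "\<And>h. S (T h) = P h" and TS: "\<And>h. T (S h) = Q h"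
  shows "{h. T h = 0} = {h. P h = 0}" "range T = range Q"
proof -
  note Pf = gram_sa_projectionD[OF P]
  have T_add: "T (x + y) = T x + T y" for x y using T(1) linear_iff by blast
  have "S (0 + 0) = S 0 + S 0" using T(2) linear_iff unfolding is_adjoint_def by blast
  then have "S 0 = 0" by simp
  show ker: "{h. T h = 0} = {h. P h = 0}"
  proof (intro Collect_cong iffI)
    fix h assume "T h = 0"
    then show "P h = 0" using ST[of h] \<open>S 0 = 0\<close> by simp
  next
    fix h assume "P h = 0"
    then have "gram (T h) (T h) = 0" using T(2) ST unfolding is_adjoint_def by simp
    then show "T h = 0" by (simp add: gram_self_eq_0_iff)
  qed
  have "T (h - P h) = 0" for h
  proof -
    have "P (h - P h) = 0" by (simp add: Pf(2,5))
    then show ?thesis using ker by blast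
  qed
  then have T_eq: "T h = Q (T h)" for h
    using T_add[of "h - P h" "P h"] ST[of h] TS[of "T h"] by simp
  show "range T = range Q"
  proof
    show "range T \<subseteq> range Q"
    proof
      fix x assume "x \<in> range T"
      then obtain h where "x = T h" by blast
      then have "x = Q (T h)" using T_eq by simp
      then show "x \<in> range Q" by blast
    qed
    show "range Q \<subseteq> range T"
    proof
      fix x assume "x \<in> range Q"
      then obtain h where "x = Q h" by blast
      then have "x = T (S h)" using TS by simp
      then show "x \<in> range T" by blast
    qed
  qed
qed

lemma partial_isometry_of_projection_products:
  assumes P: "gram_sa_projection smulZ Zp smulH gram P"
    and Q: "gram_sa_projection smulZ Zp smulH gram Q"
    and T: "Vector_Spaces.linear smulH smulH T" "is_adjoint smulH gram T S"
    and ST: "\<And>h. S (T h) = P h" and TS: "\<And>h. T (S h) = Q h"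
  shows "T \<in> PI smulH gram \<and> T \<in> Bstar smulZ Zp smulH gram"
proof -
  note Pf = gram_sa_projectionD[OF P]
  note ker_range = kernel_range_of_adjoint_products[OF P T ST TS]
  have gram_T: "gram (T h) (T k) = gram h (P k)" for h k
    using T(2) ST unfolding is_adjoint_def by simp
  have "gram (T h) (T k) = gram h k" if "h \<in> gram_orth gram {h. T h = 0}" for h k
  proof -
    have "gram h (k - P k) = 0" using that unfolding ker_range(1) gram_orth_def by (simp add: Pf(2,5))
    then show ?thesis by (simp add: gram_T gram_diff_right)
  qed
  then have "T \<in> PI smulH gram"
    unfolding PI_def using T(1) accessible_kernel[OF P] accessible_range[OF Q] ker_range by auto
  moreover have "bounded_by smulZ Zp gram T 1"
  proof -
    have "gram h h - gram (T h) (T h) = gram (h - P h) (h - P h)" for h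
      by (simp add: gram_T gram_diff_left gram_diff_right Pf(4,5))
    then show ?thesis unfolding bounded_by_def using gram_pos by simp
  qed
  ultimately show ?thesis unfolding Bstar_def Bops_def using T by blast
qed

lemma sa_contraction_square:
  assumes "\<And>x y. A (x + y) = A x + A y" "\<And>c x. A (smulH c x) = smulH c (A x)"
    and "\<And>x y. gram (A x) y = gram x (A y)"
    and "bounded_by smulZ Zp gram A M" "M < 1"
  shows "sa_contraction smulZ invZ Zp smulH gram (\<lambda>h. A (A h)) (M\<^sup>2)"
proof unfold_locales
  show "zle (gram (A (A x)) (A (A x))) (rscale ((M\<^sup>2)\<^sup>2) (gram x x))" for x
  proof -
    have "zle (gram (A (A x)) (A (A x))) (rscale (M\<^sup>2) (gram (A x) (A x)))"
      by (rule bounded_byD[OF assms(4)])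
    also have "zle \<dots> (rscale (M\<^sup>2) (rscale (M\<^sup>2) (gram x x)))"
      by (intro zle_rscale_mono bounded_byD[OF assms(4)]) simp
    finally show ?thesis by (simp add: rscale_rscale power2_eq_square)
  qed
  show "M\<^sup>2 < 1" using assms(4,5) unfolding bounded_by_def by (simp add: power_less_one_iff)
qed (use assms in auto)

end

context sa_contraction
begin

lemma inv_sqrt_adjoint_pair:
  assumes P: "gram_sa_projection smulZ Zp smulH gram P"
    and Q: "gram_sa_projection smulZ Zp smulH gram Q"
    and X_P: "\<And>h. X (P h) = P h - P (Q (P h))" "\<And>h. P (X h) = P h - P (Q (P h))"
    and X_Q: "\<And>h. X (Q h) = Q h - Q (P (Q h))" "\<And>h. Q (X h) = Q h - Q (P (Q h))"
  shows "Vector_Spaces.linear smulH smulH (\<lambda>h. Q (P (inv_sqrt h)))"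
    and "is_adjoint smulH gram (\<lambda>h. Q (P (inv_sqrt h))) (\<lambda>h. inv_sqrt (P (Q h)))"
    and "inv_sqrt (P (Q (Q (P (inv_sqrt h))))) = P h"
    and "Q (P (inv_sqrt (inv_sqrt (P (Q h))))) = Q h"
proof -
  note Pf = gram_sa_projectionD[OF P] and Qf = gram_sa_projectionD[OF Q]
  obtain MP MQ where MP: "bounded_by smulZ Zp gram P MP" and MQ: "bounded_by smulZ Zp gram Q MQ"
    using Pf(6) Qf(6) by blast
  have inv_sqrt_P: "inv_sqrt (P h) = P (inv_sqrt h)" for h
    by (rule inv_sqrt_commute[OF Pf(1,3) _ bounded_byD[OF MP]]) (simp add: X_P)
  have inv_sqrt_Q: "inv_sqrt (Q h) = Q (inv_sqrt h)" for h
    by (rule inv_sqrt_commute[OF Qf(1,3) _ bounded_byD[OF MQ]]) (simp add: X_Q)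
  show "Vector_Spaces.linear smulH smulH (\<lambda>h. Q (P (inv_sqrt h)))"
    unfolding linear_iff by (simp add: inv_sqrt_add inv_sqrt_smul Pf(1,3) Qf(1,3))
  show "is_adjoint smulH gram (\<lambda>h. Q (P (inv_sqrt h))) (\<lambda>h. inv_sqrt (P (Q h)))"
    unfolding is_adjoint_def linear_iff
    by (simp add: inv_sqrt_add inv_sqrt_smul Pf(1,3,4) Qf(1,3,4) inv_sqrt_self_adjoint)
  show "inv_sqrt (P (Q (Q (P (inv_sqrt h))))) = P h"
    using inv_sqrt_one_minus_X_inv_sqrt[of "inv_sqrt (P h)" "P h"] by (simp add: Qf(5) X_P inv_sqrt_P)
  let ?w = "inv_sqrt (inv_sqrt h)"
  have "Q (P (inv_sqrt (inv_sqrt (P (Q h))))) = Q (P (Q ?w))"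
    by (simp add: inv_sqrt_P inv_sqrt_Q Pf(5))
  also have "\<dots> = Q (?w - X ?w)" by (simp add: Qf(2) X_Q)
  also have "?w - X ?w = h"
    using inv_sqrt_one_minus_X_inv_sqrt[of "inv_sqrt h" h] inv_sqrt_one_minus_X[of "inv_sqrt h"] by simp
  finally show "Q (P (inv_sqrt (inv_sqrt (P (Q h))))) = Q h" .
qed

end

context loynes_space
begin

lemma adjoint_pair_of_close_projections:
  assumes P: "gram_sa_projection smulZ Zp smulH gram P"
    and Q: "gram_sa_projection smulZ Zp smulH gram Q"
    and "op_norm smulZ Zp gram (\<lambda>h. P h - Q h) < 1"
  obtains T S where "Vector_Spaces.linear smulH smulH T" "is_adjoint smulH gram T S"
    and "\<And>h. S (T h) = P h" "\<And>h. T (S h) = Q h"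
proof -
  note Pf = gram_sa_projectionD[OF P] and Qf = gram_sa_projectionD[OF Q]
  obtain M where M: "bounded_by smulZ Zp gram (\<lambda>h. P h - Q h) M" "M < 1"
    using Pf(6) Qf(6) bounded_by_diff bounded_by_less_of_op_norm_less assms(3) by blast
  define A where "A = (\<lambda>h. P h - Q h)"
  interpret sa_contraction smulZ invZ Zp smulH gram "\<lambda>h. A (A h)" "M\<^sup>2"
    using M unfolding A_def[symmetric]
    by (intro sa_contraction_square)
      (simp_all add: A_def Pf(1,3,4) Qf(1,3,4) gram_diff_left gram_diff_right H.scale_right_diff_distrib)
  have "A (A (P h)) = P h - P (Q (P h))" "P (A (A h)) = P h - P (Q (P h))"
    and "A (A (Q h)) = Q h - Q (P (Q h))" "Q (A (A h)) = Q h - Q (P (Q h))" for h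
    unfolding A_def by (simp_all add: Pf(2,5) Qf(2,5))
  note pair = inv_sqrt_adjoint_pair[OF P Q this]
  show thesis by (rule that[OF pair(1,2)]) (simp_all add: pair(3,4))
qed

end

theorem theorem2p1:
  fixes smulZ :: "complex \<Rightarrow> 'z::{t2_space,ab_group_add} \<Rightarrow> 'z"
    and invZ :: "'z \<Rightarrow> 'z" and Zp :: "'z set"
    and smulH :: "complex \<Rightarrow> 'h::ab_group_add \<Rightarrow> 'h"
    and gram :: "'h \<Rightarrow> 'h \<Rightarrow> 'z"
    and P Q :: "'h \<Rightarrow> 'h"
  assumes "loynes_space smulZ invZ Zp smulH gram"
    and "gram_sa_projection smulZ Zp smulH gram P"
    and "gram_sa_projection smulZ Zp smulH gram Q"
    and "op_norm smulZ Zp gram (\<lambda>h. P h - Q h) < 1"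
  shows "\<exists>T. T \<in> PI smulH gram \<and> T \<in> Bstar smulZ Zp smulH gram
            \<and> P = adjoint smulH gram T \<circ> T \<and> Q = T \<circ> adjoint smulH gram T"
proof -
  interpret loynes_space smulZ invZ Zp smulH gram by (rule assms(1))
  obtain T S where T: "Vector_Spaces.linear smulH smulH T" "is_adjoint smulH gram T S"
    and ST: "\<And>h. S (T h) = P h" and TS: "\<And>h. T (S h) = Q h"
    using adjoint_pair_of_close_projections[OF assms(2-4)] by blast
  have "adjoint smulH gram T = S" using T(2) by (rule adjoint_eqI)
  then show ?thesis
    using partial_isometry_of_projection_products[OF assms(2,3) T ST TS]
    by (auto simp: fun_eq_iff ST TS)
qed

end
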